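(* Let $\lambda\in\mathbb C$ be a root of $\chi(\lambda)=\prod_{k=1}^{m-1}(\lambda+k)-m!$ with $\Re(\lambda)>\frac12$. Then, as $n\to+\infty$, $Y_n\to Y_\infty$ almost surely and in $L^2$, where $Y_\infty$ is a complex random variable with variance $$\mathrm{Var}(Y_\infty)=\frac{m^2\,\mathbb E|A|^2-1}{1-m\,\mathbb E|A|^2}.$$
   Context: $m\ge2$ is an integer. $T=\tau_{(1)}+\dots+\tau_{(m-1)}$ where the $\tau_{(j)}$ are independent and $\tau_{(j)}$ is exponential with parameter $j$. Let $A=e^{-\lambda T}$, and let $A_u$, $u\in U=\bigcup_{n\ge1}\{1,\dots,m\}^n$, be independent copies of $A$, independent of $A$. Set $Y_0=1$, $Y_1=mA$, and for $n\ge2$, $Y_n=\sum_{u_1\dots u_{n-1}\in\{1,\dots,m\}^{n-1}}mAA_{u_1}A_{u_1u_2}\cdots A_{u_1\dots u_{n-1}}$. For a complex random variable $X$, $\mathrm{Var}X=\mathbb E|X-\mathbb EX|^2$. *)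

theory Defs
  imports "HOL-Probability.Probability"
begin

definition words :: "nat \<Rightarrow> nat \<Rightarrow> nat list set" where
  "words m k = {w. length w = k \<and> set w \<subseteq> {1..m}}"

definition Uwords :: "nat \<Rightarrow> nat list set" where
  "Uwords m = {u. u \<noteq> [] \<and> set u \<subseteq> {1..m}}"

definition Yseq :: "nat \<Rightarrow> ('a \<Rightarrow> complex) \<Rightarrow> (nat list \<Rightarrow> 'a \<Rightarrow> complex) \<Rightarrow> nat \<Rightarrow> 'a \<Rightarrow> complex" where
  "Yseq m A Au n \<omega> = (if n = 0 then 1 else
     (\<Sum>w\<in>words m (n - 1). of_nat m * A \<omega> * (\<Prod>k\<in>{1..n-1}. Au (take k w) \<omega>)))"

end

theory Submission
  imports Defs "HOL-Probability.Sinc_Integral"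
begin

(*
  Write A_u for the weight at vertex u of the m-ary tree, with A_[] = A.  Then Y_n is the weighted
  size of generation n, and splitting at the root gives Y_(n+1) = A * (Y_n^(1) + ... + Y_n^(m)),
  where the subtree cascades Y^(i) are independent of each other and of A.

  The Laplace transform E exp(-z T) = prod_j j / (j + z) shows that a root lambda of chi has
  E A = (m-1)!/m! = 1/m, so E Y_n = 1, and that Re lambda > 1/2 gives a = E|A|^2 < 1/m.  The
  recursion makes the increments orthogonal: for q <= r, E[Y_r conj(Y_q)] = s_q with
  s_(n+1) = a m (s_n + m - 1), hence E|Y_r - Y_q|^2 = s_r - s_q = (m^2 a - 1) sum_(q<=k<r) (m a)^k.
  These geometrically decaying increments give almost sure convergence; Fatou's lemma then gives
  L^2 convergence, and Var Y_oo = lim s_n - 1 = (m^2 a - 1) / (1 - m a).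
*)

section \<open>Weighted sums over the tree of words\<close>

lemma borel_measurable_cnj [measurable]: "cnj \<in> borel_measurable borel"
  using continuous_on_cnj[OF continuous_on_id] by (rule borel_measurable_continuous_onI)

fun tree_sum :: "nat \<Rightarrow> (nat list \<Rightarrow> 'b::comm_semiring_1) \<Rightarrow> nat \<Rightarrow> 'b" where
  "tree_sum m g 0 = 1"
| "tree_sum m g (Suc n) = g [] * (\<Sum>i=1..m. tree_sum m (\<lambda>u. g (i # u)) n)"

lemma words_Suc: "words m (Suc n) = (\<lambda>(i, v). i # v) ` ({1..m} \<times> words m n)"
  unfolding words_def by (auto simp: length_Suc_conv image_iff)

lemma tree_sum_Suc_explicit:
  "tree_sum m g (Suc n) = (\<Sum>w\<in>words m n. of_nat m * (\<Prod>k<Suc n. g (take k w)))"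
proof (induction n arbitrary: g)
  case 0
  have "words m 0 = {[]}" by (auto simp: words_def)
  then show ?case by (simp add: mult.commute)
next
  case (Suc n)
  have inj: "inj_on (\<lambda>(i, v). i # v) ({1..m} \<times> words m n)"
    by (auto simp: inj_on_def)
  have "tree_sum m g (Suc (Suc n))
      = g [] * (\<Sum>i=1..m. \<Sum>v\<in>words m n. of_nat m * (\<Prod>k<Suc n. g (i # take k v)))"
    by (subst tree_sum.simps(2)) (simp only: Suc.IH)
  also have "\<dots> = (\<Sum>i=1..m. \<Sum>v\<in>words m n. of_nat m * (\<Prod>k<Suc (Suc n). g (take k (i # v))))"
    by (simp add: sum_distrib_left prod.lessThan_Suc_shift ac_simps del: prod.lessThan_Suc)
  also have "\<dots> = (\<Sum>w\<in>words m (Suc n). of_nat m * (\<Prod>k<Suc (Suc n). g (take k w)))"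
    unfolding words_Suc sum.reindex[OF inj] sum.cartesian_product by (simp add: case_prod_unfold)
  finally show ?case .
qed

lemma Yseq_eq_tree_sum:
  "Yseq m A Au n \<omega> = tree_sum m (\<lambda>u. if u = [] then A \<omega> else Au u \<omega>) n"
proof (cases n)
  case (Suc n')
  have "(\<Prod>k<Suc n'. (if take k w = [] then A \<omega> else Au (take k w) \<omega>))
      = A \<omega> * (\<Prod>k\<in>{1..n'}. Au (take k w) \<omega>)" if "w \<in> words m n'" for w
  proof -
    have "take (Suc k) w \<noteq> []" if "k < n'" for k
      using that \<open>w \<in> words m n'\<close> by (auto simp: words_def)
    then show ?thesis
      by (simp add: prod.lessThan_Suc_shift prod.atLeast1_atMost_eq del: prod.lessThan_Suc)
  qed
  then show ?thesis
    unfolding Suc by (simp add: Yseq_def tree_sum_Suc_explicit ac_simps del: tree_sum.simps)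
qed (simp add: Yseq_def)

lemma tree_sum_cong:
  assumes "\<And>u. u \<in> lists {1..m} \<Longrightarrow> length u < n \<Longrightarrow> g u = g' u"
  shows "tree_sum m g n = tree_sum m g' n"
  using assms
proof (induction n arbitrary: g g')
  case (Suc n)
  have "tree_sum m (\<lambda>u. g (i # u)) n = tree_sum m (\<lambda>u. g' (i # u)) n" if "i \<in> {1..m}" for i
    using that Suc.prems by (intro Suc.IH) auto
  moreover have "g [] = g' []"
    using Suc.prems by simp
  ultimately show ?case by simp
qed simp

lemma norm_tree_sum_le:
  fixes g :: "nat list \<Rightarrow> 'b::{comm_semiring_1, real_normed_algebra_1}"
  assumes "\<And>u. u \<in> lists {1..m} \<Longrightarrow> length u < n \<Longrightarrow> norm (g u) \<le> 1"
  shows "norm (tree_sum m g n) \<le> real m ^ n"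
  using assms
proof (induction n arbitrary: g)
  case (Suc n)
  have "norm (tree_sum m g (Suc n)) \<le> norm (g []) * (\<Sum>i=1..m. norm (tree_sum m (\<lambda>u. g (i # u)) n))"
    unfolding tree_sum.simps
    by (intro norm_mult_ineq[THEN order_trans] mult_left_mono norm_sum) simp
  also have "\<dots> \<le> 1 * (\<Sum>i=1..m. real m ^ n)"
    using Suc.prems by (intro mult_mono sum_mono Suc.IH sum_nonneg) auto
  finally show ?case by simp
qed simp

lemma borel_measurable_tree_sum:
  fixes h :: "nat list \<Rightarrow> 'i"
  assumes "\<And>u. u \<in> lists {1..m} \<Longrightarrow> length u < n \<Longrightarrow> h u \<in> I"
  shows "(\<lambda>f. tree_sum m (\<lambda>u. f (h u)) n) \<in> borel_measurable (PiM I (\<lambda>_. borel :: complex measure))"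
  using assms
proof (induction n arbitrary: h)
  case (Suc n)
  have "(\<lambda>f. tree_sum m (\<lambda>u. f (h (i # u))) n) \<in> borel_measurable (PiM I (\<lambda>_. borel :: complex measure))"
    if "i \<in> {1..m}" for i
    using Suc.prems that by (intro Suc.IH[of "\<lambda>u. h (i # u)"]) auto
  moreover have "h [] \<in> I" using Suc.prems by simp
  ultimately show ?case by simp measurable
qed simp

section \<open>Cascades of independent weights\<close>

definition subtree :: "nat \<Rightarrow> nat list \<Rightarrow> nat list set" where
  "subtree m p = (\<lambda>u. p @ u) ` lists {1..m}"

lemma subtree_subset_lists: "p \<in> lists {1..m} \<Longrightarrow> subtree m p \<subseteq> lists {1..m}"
  by (auto simp: subtree_def)

definition descendants :: "nat \<Rightarrow> nat list \<Rightarrow> nat list set" where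
  "descendants m p = (\<Union>i\<in>{1..m}. subtree m (p @ [i]))"

lemma descendants_subset_lists: "p \<in> lists {1..m} \<Longrightarrow> descendants m p \<subseteq> lists {1..m}"
  by (auto simp: descendants_def subtree_def)

lemma not_in_descendants: "p \<notin> descendants m p"
  by (auto simp: descendants_def subtree_def)

lemma disjoint_subtrees_children:
  "i \<noteq> j \<Longrightarrow> subtree m (p @ [i]) \<inter> subtree m (p @ [j]) = {}"
  by (auto simp: subtree_def)

locale cascade = prob_space +
  fixes m :: nat and W :: "nat list \<Rightarrow> 'a \<Rightarrow> complex" and a :: real
  assumes m_pos: "0 < m"
    and indep_W: "indep_vars (\<lambda>_. borel) W (lists {1..m})"
    and expectation_W: "\<And>u. u \<in> lists {1..m} \<Longrightarrow> expectation (W u) = 1 / of_nat m"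
    and second_moment_W: "\<And>u. u \<in> lists {1..m} \<Longrightarrow> expectation (\<lambda>\<omega>. (cmod (W u \<omega>))\<^sup>2) = a"
    and norm_W_le_1: "AE \<omega> in M. \<forall>u\<in>lists {1..m}. cmod (W u \<omega>) \<le> 1"
begin

definition Y :: "nat list \<Rightarrow> nat \<Rightarrow> 'a \<Rightarrow> complex" where
  "Y p n \<omega> = tree_sum m (\<lambda>u. W (p @ u) \<omega>) n"

lemma Y_0 [simp]: "Y p 0 \<omega> = 1"
  by (simp add: Y_def)

lemma Y_Suc: "Y p (Suc n) \<omega> = W p \<omega> * (\<Sum>i=1..m. Y (p @ [i]) n \<omega>)"
  by (simp add: Y_def)

lemma measurable_W: "u \<in> lists {1..m} \<Longrightarrow> W u \<in> borel_measurable M"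
  using indep_W by (auto simp: indep_vars_def)

definition determined_by :: "nat list set \<Rightarrow> ('a \<Rightarrow> complex) \<Rightarrow> bool" where
  "determined_by I X \<longleftrightarrow>
     (\<exists>G \<in> borel_measurable (PiM I (\<lambda>_. borel)). X = (\<lambda>\<omega>. G (\<lambda>u\<in>I. W u \<omega>)))"

lemma determined_by_measurable:
  assumes "I \<subseteq> lists {1..m}" "determined_by I X"
  shows "X \<in> borel_measurable M"
proof -
  obtain G where G: "G \<in> borel_measurable (PiM I (\<lambda>_. borel))" "X = (\<lambda>\<omega>. G (\<lambda>u\<in>I. W u \<omega>))"
    using assms(2) by (auto simp: determined_by_def)
  have "(\<lambda>\<omega>. \<lambda>u\<in>I. W u \<omega>) \<in> measurable M (PiM I (\<lambda>_. borel))"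
    using assms(1) by (intro measurable_restrict measurable_W) auto
  then show ?thesis
    unfolding G(2) by (rule measurable_compose[OF _ G(1)])
qed

lemma determined_by_mono:
  assumes "I \<subseteq> J" "determined_by I X"
  shows "determined_by J X"
proof -
  obtain G where G: "G \<in> borel_measurable (PiM I (\<lambda>_. borel))" "X = (\<lambda>\<omega>. G (\<lambda>u\<in>I. W u \<omega>))"
    using assms(2) by (auto simp: determined_by_def)
  have "(\<lambda>f. G (restrict f I)) \<in> borel_measurable (PiM J (\<lambda>_. borel))"
    using measurable_restrict_subset[OF assms(1)] G(1) by (rule measurable_compose)
  moreover have "X = (\<lambda>\<omega>. G (restrict (\<lambda>u\<in>J. W u \<omega>) I))"
    using assms(1) G(2) by (simp add: Int_absorb1)
  ultimately show ?thesis
    unfolding determined_by_def by (intro bexI[of _ "\<lambda>f. G (restrict f I)"])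
qed

lemma determined_by_W: "determined_by {p} (W p)"
  unfolding determined_by_def
  by (intro bexI[of _ "\<lambda>f. f p"] measurable_component_singleton) auto

lemma determined_by_compose:
  assumes "h \<in> borel_measurable borel" "determined_by I X"
  shows "determined_by I (\<lambda>\<omega>. h (X \<omega>))"
proof -
  obtain G where "G \<in> borel_measurable (PiM I (\<lambda>_. borel))" "X = (\<lambda>\<omega>. G (\<lambda>u\<in>I. W u \<omega>))"
    using assms(2) by (auto simp: determined_by_def)
  then show ?thesis
    unfolding determined_by_def
    by (intro bexI[of _ "\<lambda>f. h (G f)"] measurable_compose[OF _ assms(1)]) auto
qed

lemma determined_by_mult:
  assumes "determined_by I X" "determined_by I X'"
  shows "determined_by I (\<lambda>\<omega>. X \<omega> * X' \<omega>)"
proof -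
  obtain G G' where
    "G \<in> borel_measurable (PiM I (\<lambda>_. borel))" "X = (\<lambda>\<omega>. G (\<lambda>u\<in>I. W u \<omega>))"
    "G' \<in> borel_measurable (PiM I (\<lambda>_. borel))" "X' = (\<lambda>\<omega>. G' (\<lambda>u\<in>I. W u \<omega>))"
    using assms by (auto simp: determined_by_def)
  then show ?thesis
    unfolding determined_by_def
    by (intro bexI[of _ "\<lambda>f. G f * G' f"] borel_measurable_times) auto
qed

lemma determined_by_sum:
  assumes "finite S" "\<And>i. i \<in> S \<Longrightarrow> determined_by I (X i)"
  shows "determined_by I (\<lambda>\<omega>. \<Sum>i\<in>S. X i \<omega>)"
proof -
  have "\<forall>i\<in>S. \<exists>G. G \<in> borel_measurable (PiM I (\<lambda>_. borel)) \<and> X i = (\<lambda>\<omega>. G (\<lambda>u\<in>I. W u \<omega>))"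
    using assms(2) by (auto simp: determined_by_def)
  then obtain G where "\<forall>i\<in>S. G i \<in> borel_measurable (PiM I (\<lambda>_. borel)) \<and> X i = (\<lambda>\<omega>. G i (\<lambda>u\<in>I. W u \<omega>))"
    by (erule bchoice[THEN exE])
  then show ?thesis
    unfolding determined_by_def
    by (intro bexI[of _ "\<lambda>f. \<Sum>i\<in>S. G i f"] borel_measurable_sum) auto
qed

lemma determined_by_indep:
  assumes "I \<inter> J = {}" "I \<subseteq> lists {1..m}" "J \<subseteq> lists {1..m}"
    and "determined_by I X" "determined_by J X'"
  shows "indep_var borel X borel X'"
proof -
  obtain G G' where
    G: "G \<in> borel_measurable (PiM I (\<lambda>_. borel))" "X = G \<circ> (\<lambda>\<omega>. \<lambda>u\<in>I. W u \<omega>)" and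
    G': "G' \<in> borel_measurable (PiM J (\<lambda>_. borel))" "X' = G' \<circ> (\<lambda>\<omega>. \<lambda>u\<in>J. W u \<omega>)"
    using assms(4,5) unfolding determined_by_def comp_def by blast
  show ?thesis
    unfolding G(2) G'(2)
    by (rule indep_var_compose[OF indep_var_restrict[OF indep_W assms(1-3)] G(1) G'(1)])
qed

lemma determined_by_Y:
  assumes "p \<in> lists {1..m}"
  shows "determined_by (subtree m p) (Y p n)"
  unfolding determined_by_def
proof (intro bexI)
  show "(\<lambda>f::nat list \<Rightarrow> complex. tree_sum m (\<lambda>u. f (p @ u)) n) \<in> borel_measurable (PiM (subtree m p) (\<lambda>_. borel))"
    by (rule borel_measurable_tree_sum) (auto simp: subtree_def)
  show "Y p n = (\<lambda>\<omega>. tree_sum m (\<lambda>u. (\<lambda>u\<in>subtree m p. W u \<omega>) (p @ u)) n)"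
    unfolding Y_def by (intro ext tree_sum_cong) (auto simp: subtree_def)
qed

lemma determined_by_Y_child:
  assumes "p \<in> lists {1..m}" "i \<in> {1..m}"
  shows "determined_by (descendants m p) (Y (p @ [i]) n)"
  using assms by (intro determined_by_mono[OF _ determined_by_Y]) (auto simp: descendants_def)

lemma indep_root_descendants:
  assumes "p \<in> lists {1..m}" "determined_by {p} X" "determined_by (descendants m p) X'"
  shows "indep_var borel X borel X'"
  using assms not_in_descendants[of p m] descendants_subset_lists[OF assms(1)]
  by (intro determined_by_indep) auto

lemma measurable_Y: "p \<in> lists {1..m} \<Longrightarrow> Y p n \<in> borel_measurable M"
  by (rule determined_by_measurable[OF subtree_subset_lists determined_by_Y])

lemma AE_norm_Y_le: "AE \<omega> in M. \<forall>p\<in>lists {1..m}. \<forall>n. cmod (Y p n \<omega>) \<le> real m ^ n"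
  using norm_W_le_1
proof eventually_elim
  case (elim \<omega>)
  show ?case
    unfolding Y_def by (intro ballI allI norm_tree_sum_le elim[rule_format]) auto
qed

lemma integrable_Y_mult_cnj:
  assumes "p \<in> lists {1..m}" "q \<in> lists {1..m}"
  shows "integrable M (\<lambda>\<omega>. Y p r \<omega> * cnj (Y q s \<omega>))"
proof (rule integrable_const_bound[where B="real m ^ r * real m ^ s"])
  show "AE \<omega> in M. norm (Y p r \<omega> * cnj (Y q s \<omega>)) \<le> real m ^ r * real m ^ s"
    using AE_norm_Y_le by eventually_elim (use assms in \<open>simp add: norm_mult mult_mono\<close>)
  show "(\<lambda>\<omega>. Y p r \<omega> * cnj (Y q s \<omega>)) \<in> borel_measurable M"
    by (intro borel_measurable_times measurable_compose[OF measurable_Y[OF assms(2)] borel_measurable_cnj]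
        measurable_Y[OF assms(1)])
qed

lemma integrable_Y: "p \<in> lists {1..m} \<Longrightarrow> integrable M (Y p n)"
  using integrable_Y_mult_cnj[of p p n 0] by simp

lemma integrable_W: "u \<in> lists {1..m} \<Longrightarrow> integrable M (W u)"
  using norm_W_le_1 measurable_W
  by (intro integrable_const_bound[where B=1]) (auto elim!: eventually_mono)

lemma integrable_sq_norm_W: "u \<in> lists {1..m} \<Longrightarrow> integrable M (\<lambda>\<omega>. (cmod (W u \<omega>))\<^sup>2)"
  using norm_W_le_1 measurable_W
  by (intro integrable_const_bound[where B=1]) (auto elim!: eventually_mono simp: abs_square_le_1)

lemma integrable_sq_dist_Y:
  assumes "p \<in> lists {1..m}"
  shows "integrable M (\<lambda>\<omega>. (cmod (Y p r \<omega> - Y p q \<omega>))\<^sup>2)"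
proof (rule integrable_const_bound[where B="(real m ^ r + real m ^ q)\<^sup>2"])
  show "AE \<omega> in M. norm ((cmod (Y p r \<omega> - Y p q \<omega>))\<^sup>2) \<le> (real m ^ r + real m ^ q)\<^sup>2"
    using AE_norm_Y_le
  proof eventually_elim
    case (elim \<omega>)
    then have "cmod (Y p r \<omega>) \<le> real m ^ r" "cmod (Y p q \<omega>) \<le> real m ^ q"
      using assms by auto
    then have "cmod (Y p r \<omega> - Y p q \<omega>) \<le> real m ^ r + real m ^ q"
      using norm_triangle_ineq4[of "Y p r \<omega>" "Y p q \<omega>"] by linarith
    then show ?case by (simp add: power_mono)
  qed
  show "(\<lambda>\<omega>. (cmod (Y p r \<omega> - Y p q \<omega>))\<^sup>2) \<in> borel_measurable M"
    using measurable_Y[OF assms] by measurable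
qed

end

section \<open>Second moments of a cascade\<close>

definition cascade_sq_moment :: "nat \<Rightarrow> real \<Rightarrow> nat \<Rightarrow> real" where
  "cascade_sq_moment m a n = 1 + (real m ^ 2 * a - 1) * (\<Sum>k<n. (real m * a) ^ k)"

lemma cascade_sq_moment_0 [simp]: "cascade_sq_moment m a 0 = 1"
  by (simp add: cascade_sq_moment_def)

lemma cascade_sq_moment_Suc:
  "cascade_sq_moment m a (Suc n) = a * real m * (cascade_sq_moment m a n + real m - 1)"
  unfolding cascade_sq_moment_def
  by (simp add: sum.lessThan_Suc_shift sum_distrib_left algebra_simps power2_eq_square
           del: sum.lessThan_Suc)

lemma cascade_sq_moment_diff:
  "q \<le> p \<Longrightarrow> cascade_sq_moment m a p - cascade_sq_moment m a q
     = (real m ^ 2 * a - 1) * (\<Sum>k\<in>{q..<p}. (real m * a) ^ k)"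
  unfolding cascade_sq_moment_def
  by (simp add: sum.atLeastLessThan_concat[of 0 q p, symmetric] lessThan_atLeast0 algebra_simps)

lemma cascade_sq_moment_LIMSEQ:
  assumes "0 \<le> real m * a" "real m * a < 1"
  shows "cascade_sq_moment m a \<longlonglongrightarrow> 1 + (real m ^ 2 * a - 1) / (1 - real m * a)"
proof -
  have "(\<lambda>n. \<Sum>k<n. (real m * a) ^ k) \<longlonglongrightarrow> 1 / (1 - real m * a)"
    using geometric_sums[of "real m * a"] assms by (simp add: sums_def)
  then show ?thesis
    unfolding cascade_sq_moment_def[abs_def] by (auto intro!: tendsto_eq_intros)
qed

context cascade
begin

lemma expectation_Y: "p \<in> lists {1..m} \<Longrightarrow> expectation (Y p n) = 1"
proof (induction n arbitrary: p)
  case 0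
  then show ?case by (simp add: prob_space)
next
  case (Suc n)
  have indep: "indep_var borel (W p) borel (\<lambda>\<omega>. \<Sum>i=1..m. Y (p @ [i]) n \<omega>)"
    using Suc.prems
    by (intro indep_root_descendants[OF Suc.prems] determined_by_sum determined_by_W
        determined_by_Y_child) auto
  have "expectation (\<lambda>\<omega>. Y p (Suc n) \<omega>)
      = expectation (W p) * expectation (\<lambda>\<omega>. \<Sum>i=1..m. Y (p @ [i]) n \<omega>)"
    unfolding Y_Suc using Suc.prems
    by (intro indep_var_lebesgue_integral[OF indep] integrable_W Bochner_Integration.integrable_sum
        integrable_Y) auto
  also have "\<dots> = 1 / of_nat m * (\<Sum>i=1..m. 1)"
    using Suc.prems Suc.IH by (simp add: expectation_W integrable_Y)
  finally show ?case
    using m_pos by simp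
qed

lemma sum_if_eq_else_one:
  "i \<in> {1..m} \<Longrightarrow> (\<Sum>j=1..m. if i = j then x else 1) = x + of_nat m - (1::'b::comm_ring_1)"
proof -
  assume i: "i \<in> {1..m}"
  have "(\<Sum>j=1..m. if i = j then x else 1) = x + (\<Sum>j\<in>{1..m} - {i}. 1)"
    using i by (subst sum.remove[of _ i]) auto
  also have "\<dots> = x + of_nat m - 1"
    using i by (simp add: of_nat_diff)
  finally show ?thesis .
qed

lemma expectation_Y_siblings_mult_cnj:
  assumes "p \<in> lists {1..m}" "i \<in> {1..m}" "j \<in> {1..m}"
  shows "i \<noteq> j \<Longrightarrow> expectation (\<lambda>\<omega>. Y (p @ [i]) r \<omega> * cnj (Y (p @ [j]) q \<omega>)) = 1"
proof -
  assume "i \<noteq> j"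
  have children: "p @ [i] \<in> lists {1..m}" "p @ [j] \<in> lists {1..m}"
    using assms by auto
  have "indep_var borel (Y (p @ [i]) r) borel (\<lambda>\<omega>. cnj (Y (p @ [j]) q \<omega>))"
    by (rule determined_by_indep[OF disjoint_subtrees_children[OF \<open>i \<noteq> j\<close>]
          subtree_subset_lists subtree_subset_lists determined_by_Y
          determined_by_compose[OF borel_measurable_cnj determined_by_Y]])
       (use children in auto)
  then have "expectation (\<lambda>\<omega>. Y (p @ [i]) r \<omega> * cnj (Y (p @ [j]) q \<omega>))
      = expectation (Y (p @ [i]) r) * expectation (\<lambda>\<omega>. cnj (Y (p @ [j]) q \<omega>))"
    by (rule indep_var_lebesgue_integral) (use children integrable_Y in auto)
  then show ?thesis
    using children by (simp add: expectation_Y)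
qed

lemma expectation_Y_mult_cnj:
  "p \<in> lists {1..m} \<Longrightarrow> q \<le> r \<Longrightarrow>
    expectation (\<lambda>\<omega>. Y p r \<omega> * cnj (Y p q \<omega>)) = of_real (cascade_sq_moment m a q)"
proof (induction q arbitrary: p r)
  case 0
  then show ?case by (simp add: expectation_Y)
next
  case (Suc q)
  obtain r' where r: "r = Suc r'" "q \<le> r'"
    using Suc.prems(2) by (cases r) auto
  define S where "S \<omega> = (\<Sum>i=1..m. \<Sum>j=1..m. Y (p @ [i]) r' \<omega> * cnj (Y (p @ [j]) q \<omega>))" for \<omega>
  have children: "i \<in> {1..m} \<Longrightarrow> p @ [i] \<in> lists {1..m}" for i
    using Suc.prems(1) by simp
  have split: "Y p r \<omega> * cnj (Y p (Suc q) \<omega>) = of_real ((cmod (W p \<omega>))\<^sup>2) * S \<omega>" for \<omega>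
    unfolding r Y_Suc S_def complex_norm_square by (simp add: sum_product algebra_simps)
  have indep: "indep_var borel (\<lambda>\<omega>. of_real ((cmod (W p \<omega>))\<^sup>2)) borel S"
    unfolding S_def using Suc.prems(1)
    by (intro indep_root_descendants[OF Suc.prems(1)] determined_by_compose[OF _ determined_by_W]
        determined_by_sum determined_by_mult determined_by_compose[OF borel_measurable_cnj]
        determined_by_Y_child) auto
  have inner: "expectation (\<lambda>\<omega>. Y (p @ [i]) r' \<omega> * cnj (Y (p @ [j]) q \<omega>))
      = (if i = j then of_real (cascade_sq_moment m a q) else 1)" if "i \<in> {1..m}" "j \<in> {1..m}" for i j
    using Suc.IH[OF children[OF that(1)] r(2)] expectation_Y_siblings_mult_cnj[OF Suc.prems(1) that]
    by auto
  have "integrable M S"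
    unfolding S_def[abs_def]
    by (intro Bochner_Integration.integrable_sum integrable_Y_mult_cnj children)
  then have "expectation (\<lambda>\<omega>. Y p r \<omega> * cnj (Y p (Suc q) \<omega>))
      = expectation (\<lambda>\<omega>. of_real ((cmod (W p \<omega>))\<^sup>2)) * expectation S"
    unfolding split using Suc.prems(1)
    by (intro indep_var_lebesgue_integral[OF indep] integrable_of_real integrable_sq_norm_W)
  also have "expectation (\<lambda>\<omega>. complex_of_real ((cmod (W p \<omega>))\<^sup>2)) = of_real a"
    by (simp only: integral_complex_of_real second_moment_W[OF Suc.prems(1)])
  also have "expectation S
      = (\<Sum>i=1..m. \<Sum>j=1..m. expectation (\<lambda>\<omega>. Y (p @ [i]) r' \<omega> * cnj (Y (p @ [j]) q \<omega>)))"
    unfolding S_def[abs_def]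
    by (subst Bochner_Integration.integral_sum)
       (auto intro!: sum.cong Bochner_Integration.integral_sum Bochner_Integration.integrable_sum
         integrable_Y_mult_cnj children)
  also have "\<dots> = (\<Sum>i=1..m. \<Sum>j=1..m. if i = j then of_real (cascade_sq_moment m a q) else 1)"
    by (intro sum.cong refl inner)
  also have "\<dots> = (\<Sum>i=1..m. of_real (cascade_sq_moment m a q) + of_nat m - 1)"
    by (intro sum.cong refl sum_if_eq_else_one)
  finally show ?case
    by (simp add: cascade_sq_moment_Suc algebra_simps)
qed

lemma expectation_sq_dist_Y:
  assumes "p \<in> lists {1..m}" "q \<le> r"
  shows "expectation (\<lambda>\<omega>. (cmod (Y p r \<omega> - Y p q \<omega>))\<^sup>2)
    = cascade_sq_moment m a r - cascade_sq_moment m a q"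
proof -
  have mixed: "expectation (\<lambda>\<omega>. Y p q \<omega> * cnj (Y p r \<omega>)) = of_real (cascade_sq_moment m a q)"
    using Bochner_Integration.integral_cnj[of M "\<lambda>\<omega>. Y p r \<omega> * cnj (Y p q \<omega>)"] expectation_Y_mult_cnj[OF assms]
    by (simp add: mult.commute)
  have "complex_of_real (expectation (\<lambda>\<omega>. (cmod (Y p r \<omega> - Y p q \<omega>))\<^sup>2))
      = expectation (\<lambda>\<omega>. Y p r \<omega> * cnj (Y p r \<omega>) - Y p r \<omega> * cnj (Y p q \<omega>)
          - (Y p q \<omega> * cnj (Y p r \<omega>) - Y p q \<omega> * cnj (Y p q \<omega>)))"
    unfolding integral_complex_of_real[symmetric] complex_norm_square by (simp add: algebra_simps)
  also have "\<dots> = of_real (cascade_sq_moment m a r - cascade_sq_moment m a q)"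
    using assms mixed by (simp add: integrable_Y_mult_cnj expectation_Y_mult_cnj)
  finally show ?thesis
    by (simp only: of_real_eq_iff)
qed

end

section \<open>Almost sure and mean square limits\<close>

lemma norm_add_sq_le:
  fixes u w :: "'b::real_normed_vector"
  assumes "0 < e"
  shows "(norm (u + w))\<^sup>2 \<le> (1 + e) * (norm u)\<^sup>2 + (1 + 1 / e) * (norm w)\<^sup>2"
proof -
  have "(norm (u + w))\<^sup>2 \<le> (norm u + norm w)\<^sup>2"
    by (simp add: norm_triangle_ineq power_mono)
  also have "\<dots> \<le> (1 + e) * (norm u)\<^sup>2 + (1 + 1 / e) * (norm w)\<^sup>2"
  proof -
    have "0 \<le> (e * norm u - norm w)\<^sup>2 / e"
      using assms by simp
    then show ?thesis
      using assms by (simp add: field_simps power2_eq_square)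
  qed
  finally show ?thesis .
qed

lemma integrable_sq_norm_add:
  fixes f g :: "'a \<Rightarrow> 'b::{banach, second_countable_topology}"
  assumes "f \<in> borel_measurable M" "g \<in> borel_measurable M"
    and "integrable M (\<lambda>x. (norm (f x))\<^sup>2)" "integrable M (\<lambda>x. (norm (g x))\<^sup>2)"
  shows "integrable M (\<lambda>x. (norm (f x + g x))\<^sup>2)"
proof (rule Bochner_Integration.integrable_bound)
  show "integrable M (\<lambda>x. 2 * (norm (f x))\<^sup>2 + 2 * (norm (g x))\<^sup>2)"
    using assms(3,4) by simp
  show "AE x in M. norm ((norm (f x + g x))\<^sup>2) \<le> norm (2 * (norm (f x))\<^sup>2 + 2 * (norm (g x))\<^sup>2)"
    using norm_add_sq_le[of 1 "f x" "g x" for x] by simp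
qed (use assms(1,2) in measurable)

lemma le_half_add_sq_div: "0 < (x::real) \<Longrightarrow> t \<le> (x + t\<^sup>2 / x) / 2"
proof -
  assume "0 < x"
  moreover have "0 \<le> (t - x)\<^sup>2 / x"
    using \<open>0 < x\<close> by simp
  ultimately show ?thesis
    by (simp add: field_simps power2_eq_square)
qed

lemma AE_summable_if_summable_integral:
  fixes f :: "nat \<Rightarrow> 'a \<Rightarrow> real"
  assumes f: "\<And>n. f n \<in> borel_measurable M" "\<And>n \<omega>. 0 \<le> f n \<omega>" "\<And>n. integrable M (f n)"
    and summable: "summable (\<lambda>n. \<integral>\<omega>. f n \<omega> \<partial>M)"
  shows "AE \<omega> in M. summable (\<lambda>n. f n \<omega>)"
proof -
  have "(\<integral>\<^sup>+\<omega>. (\<Sum>n. ennreal (f n \<omega>)) \<partial>M) = (\<Sum>n. \<integral>\<^sup>+\<omega>. f n \<omega> \<partial>M)"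
    by (rule nn_integral_suminf) (use f(1) in measurable)
  also have "\<dots> = (\<Sum>n. ennreal (\<integral>\<omega>. f n \<omega> \<partial>M))"
    using f by (intro arg_cong[where f=suminf] ext nn_integral_eq_integral) auto
  also have "\<dots> = ennreal (\<Sum>n. \<integral>\<omega>. f n \<omega> \<partial>M)"
    using f summable by (intro suminf_ennreal2 integral_nonneg_AE) auto
  finally have "AE \<omega> in M. (\<Sum>n. ennreal (f n \<omega>)) \<noteq> \<infinity>"
    using f(1) by (intro nn_integral_PInf_AE) (simp_all, measurable)
  then show ?thesis
    by eventually_elim (rule summable_suminf_not_top[OF f(2)], simp)
qed

lemma AE_convergent_if_sq_increments_geometric:
  fixes X :: "nat \<Rightarrow> 'a \<Rightarrow> 'b::{banach, second_countable_topology}"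
  assumes X: "\<And>n. X n \<in> borel_measurable M"
    and int: "\<And>n. integrable M (\<lambda>\<omega>. (norm (X (Suc n) \<omega> - X n \<omega>))\<^sup>2)"
    and bound: "\<And>n. (\<integral>\<omega>. (norm (X (Suc n) \<omega> - X n \<omega>))\<^sup>2 \<partial>M) \<le> c * \<rho> ^ n"
    and \<rho>: "0 \<le> \<rho>" "\<rho> < 1"
  shows "AE \<omega> in M. convergent (\<lambda>n. X n \<omega>)"
proof -
  define r where "r = (1 + \<rho>) / 2"
  have r: "0 < r" "r < 1" "\<rho> < r"
    using \<rho> by (auto simp: r_def)
  \<comment> \<open>Weighted by \<open>r\<^sup>-\<^sup>n\<close>, the squared increments still have summable expectations,
    so they are a.s. summable; AM-GM then bounds \<open>norm (X (Suc n) - X n)\<close> by \<open>(r\<^sup>n + f n) / 2\<close>.\<close>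
  define f where "f n \<omega> = (norm (X (Suc n) \<omega> - X n \<omega>))\<^sup>2 / r ^ n" for n \<omega>
  have "AE \<omega> in M. summable (\<lambda>n. f n \<omega>)"
  proof (rule AE_summable_if_summable_integral)
    show "summable (\<lambda>n. \<integral>\<omega>. f n \<omega> \<partial>M)"
    proof (rule summable_comparison_test')
      show "summable (\<lambda>n. c * (\<rho> / r) ^ n)"
        using \<rho> r by (intro summable_mult summable_geometric) auto
      show "norm (\<integral>\<omega>. f n \<omega> \<partial>M) \<le> c * (\<rho> / r) ^ n" for n
        using bound[of n] r integral_nonneg_AE[of "\<lambda>\<omega>. (norm (X (Suc n) \<omega> - X n \<omega>))\<^sup>2" M]
        by (simp add: f_def power_divide divide_right_mono)
    qed
    show "f n \<in> borel_measurable M" for n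
      unfolding f_def using X by measurable
    show "0 \<le> f n \<omega>" for n \<omega>
      using r by (simp add: f_def)
    show "integrable M (f n)" for n
      unfolding f_def[abs_def] using int by (rule integrable_divide)
  qed
  then show ?thesis
  proof eventually_elim
    case (elim \<omega>)
    then have "summable (\<lambda>n. (r ^ n + f n \<omega>) / 2)"
      using r by (intro summable_divide summable_add summable_geometric) auto
    moreover have "norm (norm (X (Suc n) \<omega> - X n \<omega>)) \<le> (r ^ n + f n \<omega>) / 2" for n
      using le_half_add_sq_div[of "r ^ n"] r unfolding f_def by simp
    ultimately have "summable (\<lambda>n. norm (X (Suc n) \<omega> - X n \<omega>))"
      by (rule summable_comparison_test')
    then have "summable (\<lambda>n. X (Suc n) \<omega> - X n \<omega>)"
      by (rule summable_norm_cancel)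
    then have "convergent (\<lambda>n. X 0 \<omega> + (X n \<omega> - X 0 \<omega>))"
      by (simp only: summable_iff_convergent sum_lessThan_telescope[of "\<lambda>k. X k \<omega>"]
          convergent_add_const_iff)
    then show ?case
      by simp
  qed
qed


lemma sq_dist_AE_limit_le:
  fixes X :: "nat \<Rightarrow> 'a \<Rightarrow> 'b::{banach, second_countable_topology}"
  assumes X: "\<And>p. X p \<in> borel_measurable M" and Y: "Y \<in> borel_measurable M"
    and Z: "Z \<in> borel_measurable M"
    and lim: "AE \<omega> in M. (\<lambda>p. X p \<omega>) \<longlonglongrightarrow> Y \<omega>"
    and int: "\<And>p. integrable M (\<lambda>\<omega>. (norm (X p \<omega> - Z \<omega>))\<^sup>2)"
    and b: "(\<lambda>p. \<integral>\<omega>. (norm (X p \<omega> - Z \<omega>))\<^sup>2 \<partial>M) \<longlonglongrightarrow> b"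
  shows "integrable M (\<lambda>\<omega>. (norm (Y \<omega> - Z \<omega>))\<^sup>2)"
    and "(\<integral>\<omega>. (norm (Y \<omega> - Z \<omega>))\<^sup>2 \<partial>M) \<le> b"
proof -
  have "(\<integral>\<^sup>+\<omega>. (norm (Y \<omega> - Z \<omega>))\<^sup>2 \<partial>M)
      = (\<integral>\<^sup>+\<omega>. liminf (\<lambda>p. ennreal ((norm (X p \<omega> - Z \<omega>))\<^sup>2)) \<partial>M)"
    using lim
    by (intro nn_integral_cong_AE, eventually_elim)
       (intro lim_imp_Liminf[symmetric] tendsto_intros, auto)
  also have "\<dots> \<le> liminf (\<lambda>p. \<integral>\<^sup>+\<omega>. (norm (X p \<omega> - Z \<omega>))\<^sup>2 \<partial>M)"
    using X Z by (intro nn_integral_liminf) measurable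
  also have "\<dots> = liminf (\<lambda>p. ennreal (\<integral>\<omega>. (norm (X p \<omega> - Z \<omega>))\<^sup>2 \<partial>M))"
    using int by (simp add: nn_integral_eq_integral)
  also have "\<dots> = ennreal b"
    using b by (intro lim_imp_Liminf tendsto_intros) auto
  finally have le: "(\<integral>\<^sup>+\<omega>. (norm (Y \<omega> - Z \<omega>))\<^sup>2 \<partial>M) \<le> ennreal b" .
  show int_Y: "integrable M (\<lambda>\<omega>. (norm (Y \<omega> - Z \<omega>))\<^sup>2)"
    using Y Z le by (intro integrableI_nonneg) (auto intro: le_less_trans)
  have "0 \<le> b"
    using b by (rule LIMSEQ_le_const) (auto intro: integral_nonneg_AE)
  then show "(\<integral>\<omega>. (norm (Y \<omega> - Z \<omega>))\<^sup>2 \<partial>M) \<le> b"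
    using le int_Y by (simp add: nn_integral_eq_integral ennreal_le_iff)
qed

lemma (in finite_measure) integrable_if_integrable_sq_norm:
  fixes f :: "'a \<Rightarrow> 'b::{banach, second_countable_topology}"
  assumes "f \<in> borel_measurable M" "integrable M (\<lambda>x. (norm (f x))\<^sup>2)"
  shows "integrable M f"
proof -
  have "(\<lambda>x. norm (f x)) \<in> borel_measurable M"
    using assms(1) by measurable
  then have "integrable M (\<lambda>x. norm (f x))"
    using assms(2) by (rule square_integrable_imp_integrable)
  then show ?thesis
    using assms(1) by (simp add: integrable_norm_iff)
qed

lemma (in prob_space) expectation_norm_le_sqrt:
  fixes f :: "'a \<Rightarrow> 'b::{banach, second_countable_topology}"
  assumes "f \<in> borel_measurable M" "integrable M (\<lambda>x. (norm (f x))\<^sup>2)"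
  shows "expectation (\<lambda>x. norm (f x)) \<le> sqrt (expectation (\<lambda>x. (norm (f x))\<^sup>2))"
proof (rule real_le_rsqrt)
  have "integrable M (\<lambda>x. norm (f x))"
    using integrable_if_integrable_sq_norm[OF assms] by simp
  then have "variance (\<lambda>x. norm (f x)) = expectation (\<lambda>x. (norm (f x))\<^sup>2) - (expectation (\<lambda>x. norm (f x)))\<^sup>2"
    using assms(2) by (rule variance_eq)
  then show "(expectation (\<lambda>x. norm (f x)))\<^sup>2 \<le> expectation (\<lambda>x. (norm (f x))\<^sup>2)"
    using variance_positive[of "\<lambda>x. norm (f x)"] by linarith
qed

lemma (in prob_space) L2_limit_expectation:
  fixes X :: "nat \<Rightarrow> 'a \<Rightarrow> 'b::{banach, second_countable_topology}"
  assumes "\<And>n. integrable M (X n)" "integrable M Y"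
    and "\<And>n. integrable M (\<lambda>\<omega>. (norm (X n \<omega> - Y \<omega>))\<^sup>2)"
    and "(\<lambda>n. expectation (\<lambda>\<omega>. (norm (X n \<omega> - Y \<omega>))\<^sup>2)) \<longlonglongrightarrow> 0"
  shows "(\<lambda>n. expectation (X n)) \<longlonglongrightarrow> expectation Y"
proof -
  have bound: "norm (expectation (X n) - expectation Y) \<le> sqrt (expectation (\<lambda>\<omega>. (norm (X n \<omega> - Y \<omega>))\<^sup>2))"
    for n
  proof -
    have "expectation (\<lambda>\<omega>. X n \<omega> - Y \<omega>) = expectation (X n) - expectation Y"
      using assms(1,2) by (rule Bochner_Integration.integral_diff)
    moreover have "norm (expectation (\<lambda>\<omega>. X n \<omega> - Y \<omega>)) \<le> expectation (\<lambda>\<omega>. norm (X n \<omega> - Y \<omega>))"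
      by (rule integral_norm_bound)
    ultimately have "norm (expectation (X n) - expectation Y) \<le> expectation (\<lambda>\<omega>. norm (X n \<omega> - Y \<omega>))"
      by (simp only:)
    also have "\<dots> \<le> sqrt (expectation (\<lambda>\<omega>. (norm (X n \<omega> - Y \<omega>))\<^sup>2))"
      using assms(1-3) by (intro expectation_norm_le_sqrt borel_measurable_diff borel_measurable_integrable)
    finally show ?thesis .
  qed
  have "(\<lambda>n. expectation (X n) - expectation Y) \<longlonglongrightarrow> 0"
  proof (rule Lim_null_comparison)
    show "\<forall>\<^sub>F n in sequentially. norm (expectation (X n) - expectation Y)
        \<le> sqrt (expectation (\<lambda>\<omega>. (norm (X n \<omega> - Y \<omega>))\<^sup>2))"
      by (intro always_eventually allI bound)
    show "(\<lambda>n. sqrt (expectation (\<lambda>\<omega>. (norm (X n \<omega> - Y \<omega>))\<^sup>2))) \<longlonglongrightarrow> 0"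
      using tendsto_real_sqrt[OF assms(4)] by simp
  qed
  then show ?thesis
    by (rule LIM_zero_cancel)
qed

lemma le_if_tendsto_le_scaled:
  fixes \<alpha> \<beta> e :: "nat \<Rightarrow> real"
  assumes \<alpha>: "\<alpha> \<longlonglongrightarrow> x" and \<beta>: "\<beta> \<longlonglongrightarrow> y" and e: "e \<longlonglongrightarrow> 0"
    and le: "\<And>k n. \<alpha> n \<le> (1 + 1 / Suc k) * \<beta> n + (1 + real (Suc k)) * e n"
  shows "x \<le> y"
proof (rule LIMSEQ_le_const)
  have "(\<lambda>k. 1 + 1 / real (Suc k)) \<longlonglongrightarrow> 1 + 0"
    using LIMSEQ_inverse_real_of_nat by (intro tendsto_add tendsto_const) (simp add: divide_inverse)
  then show "(\<lambda>k. (1 + 1 / Suc k) * y) \<longlonglongrightarrow> y"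
    using tendsto_mult_right[of _ 1 sequentially y] by simp
  show "\<exists>N. \<forall>k\<ge>N. x \<le> (1 + 1 / Suc k) * y"
  proof (intro exI allI impI)
    fix k :: nat
    have "(\<lambda>n. (1 + 1 / Suc k) * \<beta> n + (1 + real (Suc k)) * e n)
        \<longlonglongrightarrow> (1 + 1 / Suc k) * y + (1 + real (Suc k)) * 0"
      by (intro tendsto_intros \<beta> e)
    then show "x \<le> (1 + 1 / Suc k) * y"
      using \<alpha> le by (intro LIMSEQ_le) auto
  qed
qed

lemma (in prob_space) sq_norm_le_shift:
  fixes f g :: "'a \<Rightarrow> 'b::{banach, second_countable_topology}"
  assumes "0 < e" "integrable M (\<lambda>\<omega>. (norm (f \<omega>))\<^sup>2)" "integrable M (\<lambda>\<omega>. (norm (g \<omega>))\<^sup>2)"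
    and "integrable M (\<lambda>\<omega>. (norm (f \<omega> - g \<omega>))\<^sup>2)"
  shows "expectation (\<lambda>\<omega>. (norm (f \<omega>))\<^sup>2)
    \<le> (1 + e) * expectation (\<lambda>\<omega>. (norm (g \<omega>))\<^sup>2) + (1 + 1 / e) * expectation (\<lambda>\<omega>. (norm (f \<omega> - g \<omega>))\<^sup>2)"
proof -
  have "expectation (\<lambda>\<omega>. (norm (f \<omega>))\<^sup>2)
      \<le> expectation (\<lambda>\<omega>. (1 + e) * (norm (g \<omega>))\<^sup>2 + (1 + 1 / e) * (norm (f \<omega> - g \<omega>))\<^sup>2)"
  proof (rule integral_mono)
    show "(norm (f \<omega>))\<^sup>2 \<le> (1 + e) * (norm (g \<omega>))\<^sup>2 + (1 + 1 / e) * (norm (f \<omega> - g \<omega>))\<^sup>2" for \<omega>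
      using norm_add_sq_le[OF assms(1), of "g \<omega>" "f \<omega> - g \<omega>"] by simp
  qed (use assms(2-4) in auto)
  also have "\<dots> = (1 + e) * expectation (\<lambda>\<omega>. (norm (g \<omega>))\<^sup>2)
      + (1 + 1 / e) * expectation (\<lambda>\<omega>. (norm (f \<omega> - g \<omega>))\<^sup>2)"
    using assms(3,4) by simp
  finally show ?thesis .
qed

lemma (in prob_space) L2_limit_sq_norm:
  fixes X :: "nat \<Rightarrow> 'a \<Rightarrow> 'b::{banach, second_countable_topology}"
  assumes X: "\<And>n. X n \<in> borel_measurable M" and Y: "Y \<in> borel_measurable M"
    and int_X: "\<And>n. integrable M (\<lambda>\<omega>. (norm (X n \<omega>))\<^sup>2)"
    and int_diff: "\<And>n. integrable M (\<lambda>\<omega>. (norm (X n \<omega> - Y \<omega>))\<^sup>2)"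
    and diff: "(\<lambda>n. expectation (\<lambda>\<omega>. (norm (X n \<omega> - Y \<omega>))\<^sup>2)) \<longlonglongrightarrow> 0"
    and v: "(\<lambda>n. expectation (\<lambda>\<omega>. (norm (X n \<omega>))\<^sup>2)) \<longlonglongrightarrow> v"
  shows "integrable M (\<lambda>\<omega>. (norm (Y \<omega>))\<^sup>2)"
    and "expectation (\<lambda>\<omega>. (norm (Y \<omega>))\<^sup>2) = v"
proof -
  let ?E = "\<lambda>f. expectation (\<lambda>\<omega>. (norm (f \<omega>))\<^sup>2)"
  have int_diff': "integrable M (\<lambda>\<omega>. (norm (Y \<omega> - X n \<omega>))\<^sup>2)" for n
    using int_diff[of n] by (simp add: norm_minus_commute)
  have "integrable M (\<lambda>\<omega>. (norm (X 0 \<omega> + (Y \<omega> - X 0 \<omega>)))\<^sup>2)"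
    using X Y int_X int_diff' by (intro integrable_sq_norm_add) auto
  then show int_Y: "integrable M (\<lambda>\<omega>. (norm (Y \<omega>))\<^sup>2)"
    by simp
  have "?E Y \<le> v"
  proof (rule le_if_tendsto_le_scaled[OF tendsto_const v])
    show "(\<lambda>n. ?E (\<lambda>\<omega>. Y \<omega> - X n \<omega>)) \<longlonglongrightarrow> 0"
      using diff by (simp add: norm_minus_commute)
    show "?E Y \<le> (1 + 1 / Suc k) * ?E (X n) + (1 + real (Suc k)) * ?E (\<lambda>\<omega>. Y \<omega> - X n \<omega>)" for k n
      using sq_norm_le_shift[OF _ int_Y int_X int_diff', of "1 / Suc k" n] by simp
  qed
  moreover have "v \<le> ?E Y"
  proof (rule le_if_tendsto_le_scaled[OF v tendsto_const diff])
    show "?E (X n) \<le> (1 + 1 / Suc k) * ?E Y + (1 + real (Suc k)) * ?E (\<lambda>\<omega>. X n \<omega> - Y \<omega>)" for k n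
      using sq_norm_le_shift[OF _ int_X int_Y int_diff, of "1 / Suc k" n] by simp
  qed
  ultimately show "?E Y = v"
    by simp
qed

section \<open>The limit of an \<open>L\<^sup>2\<close>-bounded cascade\<close>

locale L2_bounded_cascade = cascade +
  assumes L2_bounded: "real m * a < 1"
begin

definition Y_lim :: "'a \<Rightarrow> complex" where
  "Y_lim \<omega> = lim (\<lambda>n. Y [] n \<omega>)"

lemma a_nonneg: "0 \<le> a"
  using second_moment_W[of "[]"] integral_nonneg_AE[of "\<lambda>\<omega>. (cmod (W [] \<omega>))\<^sup>2" M] by simp

definition variance_limit :: real where
  "variance_limit = (real m ^ 2 * a - 1) / (1 - real m * a)"

lemma tendsto_cascade_sq_moment: "cascade_sq_moment m a \<longlonglongrightarrow> 1 + variance_limit"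
  unfolding variance_limit_def using a_nonneg L2_bounded by (intro cascade_sq_moment_LIMSEQ) auto

lemma measurable_Y_lim [measurable]: "Y_lim \<in> borel_measurable M"
  unfolding Y_lim_def using measurable_Y[of "[]"] by measurable

lemma AE_Y_tendsto_Y_lim: "AE \<omega> in M. (\<lambda>n. Y [] n \<omega>) \<longlonglongrightarrow> Y_lim \<omega>"
proof -
  have "AE \<omega> in M. convergent (\<lambda>n. Y [] n \<omega>)"
  proof (rule AE_convergent_if_sq_increments_geometric)
    show "(\<integral>\<omega>. (norm (Y [] (Suc n) \<omega> - Y [] n \<omega>))\<^sup>2 \<partial>M) \<le> (real m ^ 2 * a - 1) * (real m * a) ^ n" for n
      by (simp add: expectation_sq_dist_Y cascade_sq_moment_diff)
  qed (use measurable_Y integrable_sq_dist_Y a_nonneg L2_bounded in auto)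
  then show ?thesis
    by eventually_elim (simp add: Y_lim_def convergent_LIMSEQ_iff)
qed

lemma
  shows integrable_sq_dist_Y_lim: "integrable M (\<lambda>\<omega>. (cmod (Y [] n \<omega> - Y_lim \<omega>))\<^sup>2)"
    and expectation_sq_dist_Y_lim_le:
      "expectation (\<lambda>\<omega>. (cmod (Y [] n \<omega> - Y_lim \<omega>))\<^sup>2)
        \<le> 1 + variance_limit - cascade_sq_moment m a n"
proof -
  have "(\<lambda>p. expectation (\<lambda>\<omega>. (norm (Y [] p \<omega> - Y [] n \<omega>))\<^sup>2))
      \<longlonglongrightarrow> 1 + variance_limit - cascade_sq_moment m a n"
  proof (rule Lim_transform_eventually)
    show "(\<lambda>p. cascade_sq_moment m a p - cascade_sq_moment m a n)
        \<longlonglongrightarrow> 1 + variance_limit - cascade_sq_moment m a n"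
      by (intro tendsto_intros tendsto_cascade_sq_moment)
    show "\<forall>\<^sub>F p in sequentially. cascade_sq_moment m a p - cascade_sq_moment m a n
        = expectation (\<lambda>\<omega>. (norm (Y [] p \<omega> - Y [] n \<omega>))\<^sup>2)"
      using eventually_ge_at_top[of n] by eventually_elim (simp add: expectation_sq_dist_Y)
  qed
  from sq_dist_AE_limit_le[OF _ _ _ AE_Y_tendsto_Y_lim _ this]
  show "integrable M (\<lambda>\<omega>. (cmod (Y [] n \<omega> - Y_lim \<omega>))\<^sup>2)"
    and "expectation (\<lambda>\<omega>. (cmod (Y [] n \<omega> - Y_lim \<omega>))\<^sup>2)
        \<le> 1 + variance_limit - cascade_sq_moment m a n"
    by (simp_all add: measurable_Y integrable_sq_dist_Y norm_minus_commute)
qed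

lemma L2_tendsto_Y_lim: "(\<lambda>n. expectation (\<lambda>\<omega>. (cmod (Y [] n \<omega> - Y_lim \<omega>))\<^sup>2)) \<longlonglongrightarrow> 0"
proof (rule real_tendsto_sandwich)
  show "\<forall>\<^sub>F n in sequentially. 0 \<le> expectation (\<lambda>\<omega>. (cmod (Y [] n \<omega> - Y_lim \<omega>))\<^sup>2)"
    by (intro always_eventually allI integral_nonneg_AE) simp
  show "\<forall>\<^sub>F n in sequentially. expectation (\<lambda>\<omega>. (cmod (Y [] n \<omega> - Y_lim \<omega>))\<^sup>2)
      \<le> 1 + variance_limit - cascade_sq_moment m a n"
    by (intro always_eventually allI expectation_sq_dist_Y_lim_le)
  show "(\<lambda>n. 1 + variance_limit - cascade_sq_moment m a n) \<longlonglongrightarrow> 0"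
    using tendsto_diff[OF tendsto_const tendsto_cascade_sq_moment,
        of "1 + variance_limit"] by simp
qed simp

lemma
  shows integrable_sq_dist_Y_lim_1: "integrable M (\<lambda>\<omega>. (cmod (Y_lim \<omega> - 1))\<^sup>2)"
    and expectation_sq_dist_Y_lim_1:
      "expectation (\<lambda>\<omega>. (cmod (Y_lim \<omega> - 1))\<^sup>2) = variance_limit"
proof -
  note L2_limit_sq_norm[where X="\<lambda>n \<omega>. Y [] n \<omega> - 1" and Y="\<lambda>\<omega>. Y_lim \<omega> - 1"
      and v="variance_limit"]
  moreover have "(\<lambda>n. expectation (\<lambda>\<omega>. (cmod (Y [] n \<omega> - 1))\<^sup>2))
      \<longlonglongrightarrow> variance_limit"
    using expectation_sq_dist_Y[of "[]" 0] tendsto_diff[OF tendsto_cascade_sq_moment tendsto_const[of 1]]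
    by simp
  ultimately show "integrable M (\<lambda>\<omega>. (cmod (Y_lim \<omega> - 1))\<^sup>2)"
    and "expectation (\<lambda>\<omega>. (cmod (Y_lim \<omega> - 1))\<^sup>2) = variance_limit"
    using integrable_sq_dist_Y[of "[]" _ 0] integrable_sq_dist_Y_lim L2_tendsto_Y_lim measurable_Y[of "[]"]
    by simp_all
qed

lemma integrable_sq_norm_Y_lim: "integrable M (\<lambda>\<omega>. (cmod (Y_lim \<omega>))\<^sup>2)"
  using integrable_sq_norm_add[OF _ _ integrable_sq_dist_Y_lim_1, of "\<lambda>_. 1"] by simp

lemma expectation_Y_lim: "expectation Y_lim = 1"
proof -
  have "(\<lambda>n. expectation (Y [] n)) \<longlonglongrightarrow> expectation Y_lim"
    using integrable_if_integrable_sq_norm[OF measurable_Y_lim integrable_sq_norm_Y_lim]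
    by (intro L2_limit_expectation integrable_Y integrable_sq_dist_Y_lim L2_tendsto_Y_lim) auto
  then show ?thesis
    using LIMSEQ_unique by (auto simp: expectation_Y)
qed

end

section \<open>Laplace transforms of exponential variables\<close>

lemma exp_neg_mult_tendsto_0:
  fixes k :: real
  assumes "0 < k"
  shows "((\<lambda>x. exp (- x * k)) \<longlongrightarrow> 0) at_top"
proof -
  have "filterlim (\<lambda>x. x * k) at_top at_top"
    by (rule filterlim_at_top_mult_tendsto_pos[OF tendsto_const assms filterlim_ident])
  then have "filterlim (\<lambda>x. - x * k) at_bot at_top"
    by (simp add: filterlim_uminus_at_bot)
  then show ?thesis
    by (rule exp_at_bot[THEN filterlim_compose])
qed

lemma laplace_exponential_density_integral:
  fixes z :: complex and l :: real
  assumes l: "0 < l" and z: "0 \<le> Re z"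
  shows "set_integrable lborel {0<..} (\<lambda>x. of_real l * exp (- (of_real l + z) * of_real x))"
    and "(LBINT x=0..\<infinity>. of_real l * exp (- (of_real l + z) * of_real x)) = of_real l / (of_real l + z)"
proof -
  define f where "f x = of_real l * exp (- (of_real l + z) * of_real x)" for x :: real
  have nz: "of_real l + z \<noteq> 0"
    using l z by (metis add_pos_nonneg less_irrefl plus_complex.sel(1) Re_complex_of_real zero_complex.sel(1))
  have norm_f_le: "norm (f x) \<le> l * exp (- (x * l))" if "0 \<le> x" for x
  proof -
    have "norm (f x) = l * exp (- (x * l) - x * Re z)"
      using l by (simp add: f_def norm_mult norm_exp_eq_Re algebra_simps)
    also have "\<dots> \<le> l * exp (- (x * l))"
      using l z that by (simp add: mult_nonneg_nonneg)
    finally show ?thesis .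
  qed
  show int: "set_integrable lborel {0<..} f"
    unfolding set_integrable_def
  proof (rule Bochner_Integration.integrable_bound)
    show "integrable lborel (\<lambda>x. l * (indicator {0<..} x *\<^sub>R exp (- (x * l))))"
      using integrable_I0i_exp_mscale[OF l] unfolding set_integrable_def by (rule integrable_mult_right)
    show "AE x in lborel. norm (indicator {0<..} x *\<^sub>R f x) \<le> norm (l * (indicator {0<..} x *\<^sub>R exp (- (x * l))))"
      using l by (intro AE_I2) (auto simp: indicator_def norm_f_le)
  qed (simp add: f_def)
  define c where "c = of_real l / (of_real l + z)"
  define g where "g w = - c * exp (- (of_real l + z) * w)" for w
  define G where "G x = g (of_real x)" for x :: real
  have "norm (G x) = norm c * exp (- x * (l + Re z))" for x
    unfolding G_def g_def by (simp add: norm_mult norm_exp_eq_Re algebra_simps)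
  moreover have "((\<lambda>x. norm c * exp (- x * (l + Re z))) \<longlongrightarrow> 0) at_top"
    using l z by (intro tendsto_mult_right_zero exp_neg_mult_tendsto_0) linarith
  ultimately have G_at_top: "(G \<longlongrightarrow> 0) at_top"
    by (intro tendsto_norm_zero_cancel[of G]) (simp only:)
  have "(LBINT x=0..\<infinity>. f x) = 0 - G 0"
  proof (rule interval_integral_FTC_integrable)
    show "(G has_vector_derivative f x) (at x)" for x
      unfolding G_def[abs_def]
    proof (rule has_vector_derivative_real_field)
      have "(g has_field_derivative - c * (exp (- (of_real l + z) * of_real x) * - (of_real l + z)))
          (at (of_real x))"
        unfolding g_def by (auto intro!: derivative_eq_intros)
      moreover have "- c * (exp (- (of_real l + z) * of_real x) * - (of_real l + z)) = f x"
        using nz by (simp add: c_def f_def field_simps)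
      ultimately show "(g has_field_derivative f x) (at (of_real x))"
        by (rule DERIV_cong)
    qed
    show "isCont f x" for x
      unfolding f_def by (intro continuous_intros)
    have "einterval 0 \<infinity> = {0::real<..}"
      by (auto simp: einterval_iff zero_ereal_def)
    then show "set_integrable lborel (einterval 0 \<infinity>) f"
      using int by (simp only:)
    show "((G \<circ> real_of_ereal) \<longlongrightarrow> G 0) (at_right 0)"
      unfolding G_def g_def zero_ereal_def ereal_tendsto_simps by (intro tendsto_eq_intros) auto
    show "((G \<circ> real_of_ereal) \<longlongrightarrow> 0) (at_left \<infinity>)"
      unfolding ereal_tendsto_simps by (rule G_at_top)
  qed simp
  then show "(LBINT x=0..\<infinity>. f x) = of_real l / (of_real l + z)"
    by (simp add: G_def g_def c_def)
qed

lemma (in prob_space) exponential_distributed_laplace: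
  fixes X :: "'a \<Rightarrow> real" and z :: complex
  assumes D: "distributed M lborel X (exponential_density l)" and l: "0 < l" and z: "0 \<le> Re z"
  shows "integrable M (\<lambda>\<omega>. exp (- z * of_real (X \<omega>)))"
    and "expectation (\<lambda>\<omega>. exp (- z * of_real (X \<omega>))) = of_real l / (of_real l + z)"
proof -
  define g where "g x = exp (- z * complex_of_real x)" for x :: real
  define h where "h x = indicator {0<..} x *\<^sub>R (of_real l * exp (- (of_real l + z) * of_real x))"
    for x :: real
  have X [measurable]: "X \<in> measurable M lborel"
    using D by (rule distributed_measurable)
  have g [measurable]: "g \<in> borel_measurable lborel"
    unfolding g_def measurable_lborel2 by (intro borel_measurable_continuous_onI continuous_intros)
  have distr: "distr M lborel X = density lborel (\<lambda>x. ennreal (exponential_density l x))"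
    using D by (rule distributed_distr_eq_density)
  have density_g: "AE x in lborel. exponential_density l x *\<^sub>R g x = h x"
    using AE_lborel_singleton[of 0]
  proof eventually_elim
    case (elim x)
    then show ?case
      by (cases "0 < x")
         (auto simp: h_def g_def exponential_density_def scaleR_conv_of_real algebra_simps
           simp flip: exp_of_real exp_add)
  qed
  have h: "integrable lborel h" "integral\<^sup>L lborel h = of_real l / (of_real l + z)"
    using laplace_exponential_density_integral[OF l z]
    unfolding set_integrable_def interval_lebesgue_integral_0_infty set_lebesgue_integral_def h_def
    by auto
  have nonneg: "AE x in lborel. 0 \<le> exponential_density l x"
    using exponential_density_nonneg[OF l] by simp
  have "integrable (distr M lborel X) g"
    unfolding distr using density_g h(1) nonneg
    by (subst integrable_density) (auto simp: integrable_cong_AE[OF _ _ density_g])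
  then show "integrable M (\<lambda>\<omega>. exp (- z * of_real (X \<omega>)))"
    using integrable_distr_eq[OF X g] by (simp add: g_def)
  have "expectation (\<lambda>\<omega>. exp (- z * of_real (X \<omega>))) = integral\<^sup>L (distr M lborel X) g"
    using integral_distr[OF X g] by (simp add: g_def)
  also have "\<dots> = integral\<^sup>L lborel (\<lambda>x. exponential_density l x *\<^sub>R g x)"
    unfolding distr using nonneg by (subst integral_density) auto
  also have "\<dots> = integral\<^sup>L lborel h"
    using density_g borel_measurable_integrable[OF h(1)] by (intro integral_cong_AE) auto
  also have "\<dots> = of_real l / (of_real l + z)"
    by (rule h(2))
  finally show "expectation (\<lambda>\<omega>. exp (- z * of_real (X \<omega>))) = of_real l / (of_real l + z)" .
qed

lemma (in prob_space) exponential_distributed_nonneg: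
  assumes "distributed M lborel X (exponential_density l)"
  shows "AE \<omega> in M. 0 \<le> X \<omega>"
  using assms by (subst distributed_AE2[OF assms]) (auto simp: exponential_density_def)

lemma (in prob_space) indep_exponential_sum_laplace:
  fixes \<tau> :: "nat \<Rightarrow> 'a \<Rightarrow> real" and z :: complex
  assumes indep: "indep_vars (\<lambda>_. borel) \<tau> J" and J: "finite J" "0 \<notin> J"
    and exp: "\<And>j. j \<in> J \<Longrightarrow> distributed M lborel (\<tau> j) (exponential_density (real j))"
    and z: "0 \<le> Re z"
  shows "expectation (\<lambda>\<omega>. exp (- z * of_real (\<Sum>j\<in>J. \<tau> j \<omega>))) = (\<Prod>j\<in>J. of_nat j / (of_nat j + z))"
proof -
  have pos: "j \<in> J \<Longrightarrow> 0 < real j" for j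
    using J(2) by (cases j) auto
  have "indep_vars (\<lambda>_. borel) (\<lambda>j \<omega>. exp (- z * complex_of_real (\<tau> j \<omega>))) J"
    by (rule indep_vars_compose2[OF indep]) (intro borel_measurable_continuous_onI continuous_intros)
  moreover have "exp (- z * of_real (\<Sum>j\<in>J. \<tau> j \<omega>)) = (\<Prod>j\<in>J. exp (- z * of_real (\<tau> j \<omega>)))" for \<omega>
    using J(1) by (simp add: sum_distrib_left exp_sum)
  ultimately have "expectation (\<lambda>\<omega>. exp (- z * of_real (\<Sum>j\<in>J. \<tau> j \<omega>)))
      = (\<Prod>j\<in>J. expectation (\<lambda>\<omega>. exp (- z * of_real (\<tau> j \<omega>))))"
    using exponential_distributed_laplace(1)[OF exp pos z] J(1)
    by (simp add: indep_vars_lebesgue_integral)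
  also have "\<dots> = (\<Prod>j\<in>J. of_nat j / (of_nat j + z))"
    using exponential_distributed_laplace(2)[OF exp pos z] by simp
  finally show ?thesis .
qed

section \<open>The weight \<open>A\<close>\<close>

lemma prod_plus_one_eq_fact: "(\<Prod>j=1..n. of_nat j + 1) = (fact (Suc n) :: 'b::{comm_semiring_1, semiring_char_0})"
  by (induction n) (simp_all add: atLeastAtMostSuc_conv algebra_simps)

lemma fact_pred_div_fact: "0 < m \<Longrightarrow> fact (m - 1) / fact m = (1 / of_nat m :: 'b::field_char_0)"
  by (simp add: fact_reduce[of m])

locale exponential_weight = prob_space +
  fixes m :: nat and lam :: complex and \<tau> :: "nat \<Rightarrow> 'a \<Rightarrow> real"
  assumes m: "2 \<le> m"
    and root: "(\<Prod>k=1..m-1. lam + of_nat k) = of_nat (fact m)"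
    and Re_lam: "1/2 < Re lam"
    and indep_\<tau>: "indep_vars (\<lambda>_. borel) \<tau> {1..m-1}"
    and exponential_\<tau>: "\<And>j. j \<in> {1..m-1} \<Longrightarrow> distributed M lborel (\<tau> j) (exponential_density (real j))"
begin

definition T :: "'a \<Rightarrow> real" where
  "T \<omega> = (\<Sum>j=1..m-1. \<tau> j \<omega>)"

definition A :: "'a \<Rightarrow> complex" where
  "A \<omega> = exp (- lam * of_real (T \<omega>))"

lemma laplace_T: "0 \<le> Re z \<Longrightarrow> expectation (\<lambda>\<omega>. exp (- z * of_real (T \<omega>))) = (\<Prod>j=1..m-1. of_nat j / (of_nat j + z))"
  unfolding T_def by (rule indep_exponential_sum_laplace[OF indep_\<tau>]) (auto intro: exponential_\<tau>)

lemma AE_norm_A_le_1: "AE \<omega> in M. cmod (A \<omega>) \<le> 1"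
proof -
  have "AE \<omega> in M. \<forall>j\<in>{1..m-1}. 0 \<le> \<tau> j \<omega>"
    by (intro AE_finite_allI exponential_distributed_nonneg[OF exponential_\<tau>]) auto
  then show ?thesis
  proof eventually_elim
    case (elim \<omega>)
    then have "0 \<le> T \<omega>"
      unfolding T_def by (intro sum_nonneg) auto
    then show ?case
      using Re_lam by (simp add: A_def)
  qed
qed

lemma expectation_A: "expectation A = 1 / of_nat m"
proof -
  have "expectation A = (\<Prod>j=1..m-1. of_nat j / (of_nat j + lam))"
    using laplace_T[of lam] Re_lam by (simp add: A_def[abs_def])
  also have "\<dots> = fact (m - 1) / (\<Prod>j=1..m-1. lam + of_nat j)"
    by (simp add: prod_dividef fact_prod add.commute)
  also have "\<dots> = fact (m - 1) / fact m"
    by (simp only: root of_nat_fact)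
  also have "\<dots> = 1 / of_nat m"
    by (rule fact_pred_div_fact) (use m in simp)
  finally show ?thesis .
qed

lemma second_moment_A_lt: "real m * expectation (\<lambda>\<omega>. (cmod (A \<omega>))\<^sup>2) < 1"
proof -
  define s where "s = 2 * Re lam"
  have s: "1 < s"
    using Re_lam by (simp add: s_def)
  have sq: "complex_of_real ((cmod (A \<omega>))\<^sup>2) = exp (- of_real s * of_real (T \<omega>))" for \<omega>
    by (simp add: A_def s_def norm_exp_eq_Re power2_eq_square mult.assoc flip: exp_add exp_of_real)
  have "complex_of_real (expectation (\<lambda>\<omega>. (cmod (A \<omega>))\<^sup>2))
      = expectation (\<lambda>\<omega>. complex_of_real ((cmod (A \<omega>))\<^sup>2))"
    by (rule integral_complex_of_real[symmetric])
  also have "\<dots> = (\<Prod>j=1..m-1. of_nat j / (of_nat j + of_real s))"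
    unfolding sq using s by (intro laplace_T) simp
  also have "\<dots> = complex_of_real (\<Prod>j=1..m-1. real j / (real j + s))"
    by simp
  finally have "expectation (\<lambda>\<omega>. (cmod (A \<omega>))\<^sup>2) = fact (m - 1) / (\<Prod>j=1..m-1. real j + s)"
    by (simp only: of_real_eq_iff) (simp add: prod_dividef fact_prod)
  also have "\<dots> < fact (m - 1) / (\<Prod>j=1..m-1. real j + 1)"
    using m s
    by (intro divide_strict_left_mono prod_mono_strict[of 1] mult_pos_pos prod_pos) auto
  also have "\<dots> = fact (m - 1) / fact m"
    using prod_plus_one_eq_fact[of "m - 1", where 'b=real] m by simp
  also have "\<dots> = 1 / real m"
    by (rule fact_pred_div_fact) (use m in simp)
  finally show ?thesis
    using m by (simp add: field_simps)
qed

end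

lemma (in prob_space) indep_sets_reindex:
  assumes inj: "inj_on f J" and indep: "indep_sets F (f ` J)"
  shows "indep_sets (\<lambda>j. F (f j)) J"
proof (rule indep_setsI)
  show "F (f j) \<subseteq> events" if "j \<in> J" for j
    using indep that by (auto simp: indep_sets_def)
  fix A K assume K: "K \<noteq> {}" "K \<subseteq> J" "finite K" and A: "\<forall>j\<in>K. A j \<in> F (f j)"
  have inj_K: "inj_on f K"
    using inj K(2) by (rule inj_on_subset)
  define A' where "A' i = A (the_inv_into K f i)" for i
  have A': "j \<in> K \<Longrightarrow> A' (f j) = A j" for j
    using the_inv_into_f_f[OF inj_K] by (simp add: A'_def)
  have "prob (\<Inter>j\<in>K. A j) = prob (\<Inter>i\<in>f ` K. A' i)"
    using A' by (auto intro!: arg_cong[where f=prob])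
  also have "\<dots> = (\<Prod>i\<in>f ` K. prob (A' i))"
    using K A A' by (intro indep_setsD[OF indep]) auto
  also have "\<dots> = (\<Prod>j\<in>K. prob (A j))"
    using A' by (simp add: prod.reindex[OF inj_K])
  finally show "prob (\<Inter>j\<in>K. A j) = (\<Prod>j\<in>K. prob (A j))" .
qed

lemma (in prob_space) indep_vars_reindex:
  assumes "inj_on f J" "indep_vars M' X (f ` J)"
  shows "indep_vars (\<lambda>j. M' (f j)) (\<lambda>j. X (f j)) J"
  using assms(2) indep_sets_reindex[OF assms(1), of "\<lambda>i. {X i -` A \<inter> space M |A. A \<in> sets (M' i)}"]
  unfolding indep_vars_def2 by auto

lemma (in prob_space) expectation_eq_if_distr_eq:
  fixes g :: "'b \<Rightarrow> 'c::{banach, second_countable_topology}"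
  assumes "X \<in> measurable M N" "X' \<in> measurable M N" "distr M N X = distr M N X'"
    and "g \<in> borel_measurable N"
  shows "expectation (\<lambda>\<omega>. g (X \<omega>)) = expectation (\<lambda>\<omega>. g (X' \<omega>))"
  using assms by (simp flip: integral_distr)

lemma (in prob_space) AE_eq_if_distr_eq:
  assumes "X \<in> measurable M N" "X' \<in> measurable M N" "distr M N X = distr M N X'"
    and "{x \<in> space N. P x} \<in> sets N"
  shows "(AE \<omega> in M. P (X \<omega>)) \<longleftrightarrow> (AE \<omega> in M. P (X' \<omega>))"
  unfolding AE_distr_iff[OF assms(1,4), symmetric] AE_distr_iff[OF assms(2,4), symmetric] assms(3) ..

lemma (in prob_space) L2_bounded_cascade_root_and_copies:
  fixes A :: "'a \<Rightarrow> complex" and Au :: "nat list \<Rightarrow> 'a \<Rightarrow> complex"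
  assumes m: "0 < m"
    and indep: "indep_vars (\<lambda>_. borel) (\<lambda>i. case i of None \<Rightarrow> A | Some u \<Rightarrow> Au u)
      (insert None (Some ` Uwords m))"
    and copies: "\<And>u. u \<in> Uwords m \<Longrightarrow> distr M borel (Au u) = distr M borel A"
    and mean: "expectation A = 1 / of_nat m"
    and bounded: "AE \<omega> in M. cmod (A \<omega>) \<le> 1"
    and L2: "real m * expectation (\<lambda>\<omega>. (cmod (A \<omega>))\<^sup>2) < 1"
  shows "L2_bounded_cascade M m (\<lambda>u. if u = [] then A else Au u) (expectation (\<lambda>\<omega>. (cmod (A \<omega>))\<^sup>2))"
proof -
  define f where "f u = (if u = [] then None else Some u)" for u :: "nat list"
  have f_image: "f ` lists {1..m} = insert None (Some ` Uwords m)"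
    by (auto simp: f_def Uwords_def image_iff intro: exI[of _ "[]"])
  have "inj_on f (lists {1..m})"
    by (auto simp: inj_on_def f_def split: if_splits)
  from indep_vars_reindex[OF this, unfolded f_image, OF indep]
  have indep_W: "indep_vars (\<lambda>_. borel) (\<lambda>u. if u = [] then A else Au u) (lists {1..m})"
    by (rule indep_vars_cong[THEN iffD1, rotated 3]) (auto simp: f_def)
  have measurable: "A \<in> borel_measurable M" "\<And>u. u \<in> Uwords m \<Longrightarrow> Au u \<in> borel_measurable M"
    using indep by (auto simp: indep_vars_def)
  have copy: "u \<in> lists {1..m} \<Longrightarrow> u \<noteq> [] \<Longrightarrow> u \<in> Uwords m" for u
    by (auto simp: Uwords_def)
  show ?thesis
  proof (unfold_locales)
    show "indep_vars (\<lambda>_. borel) (\<lambda>u. if u = [] then A else Au u) (lists {1..m})"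
      by (rule indep_W)
    show "expectation (if u = [] then A else Au u) = 1 / of_nat m" if "u \<in> lists {1..m}" for u
      using expectation_eq_if_distr_eq[OF measurable(2) measurable(1) copies, of u "\<lambda>z. z"]
        copy[OF that] mean by auto
    show "expectation (\<lambda>\<omega>. (cmod ((if u = [] then A else Au u) \<omega>))\<^sup>2) = expectation (\<lambda>\<omega>. (cmod (A \<omega>))\<^sup>2)"
      if "u \<in> lists {1..m}" for u
      using expectation_eq_if_distr_eq[OF measurable(2) measurable(1) copies, of u "\<lambda>z. (cmod z)\<^sup>2"]
        copy[OF that] by auto
    have "AE \<omega> in M. cmod ((if u = [] then A else Au u) \<omega>) \<le> 1" if "u \<in> lists {1..m}" for u
      using AE_eq_if_distr_eq[OF measurable(2) measurable(1) copies, of u "\<lambda>z. cmod z \<le> 1"]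
        copy[OF that] bounded by auto
    then show "AE \<omega> in M. \<forall>u\<in>lists {1..m}. cmod ((if u = [] then A else Au u) \<omega>) \<le> 1"
      by (subst AE_ball_countable) auto
  qed (use m L2 in auto)
qed

theorem lemma8p1:
  fixes M :: "'a measure" and m :: nat and lam :: complex
    and tau :: "nat \<Rightarrow> 'a \<Rightarrow> real"
    and A :: "'a \<Rightarrow> complex" and Au :: "nat list \<Rightarrow> 'a \<Rightarrow> complex"
  assumes P: "prob_space M"
    and m2: "m \<ge> 2"
    and root: "(\<Prod>k=1..m-1. lam + of_nat k) - of_nat (fact m) = 0"
    and re: "Re lam > 1/2"
    and tau_indep: "prob_space.indep_vars M (\<lambda>_. borel) tau {1..m-1}"
    and tau_exp: "\<forall>j\<in>{1..m-1}. distributed M lborel (tau j) (exponential_density (real j))"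
    and A_def: "A = (\<lambda>\<omega>. exp (- lam * of_real (\<Sum>j=1..m-1. tau j \<omega>)))"
    and indep: "prob_space.indep_vars M (\<lambda>_. borel)
                  (\<lambda>i. case i of None \<Rightarrow> A | Some u \<Rightarrow> Au u) (insert None (Some ` Uwords m))"
    and copies: "\<forall>u\<in>Uwords m. distr M borel (Au u) = distr M borel A"
  shows "\<exists>Yinf :: 'a \<Rightarrow> complex.
           Yinf \<in> borel_measurable M \<and>
           (AE \<omega> in M. (\<lambda>n. Yseq m A Au n \<omega>) \<longlonglongrightarrow> Yinf \<omega>) \<and>
           integrable M (\<lambda>\<omega>. (cmod (Yinf \<omega>))\<^sup>2) \<and>
           (\<forall>n. integrable M (\<lambda>\<omega>. (cmod (Yseq m A Au n \<omega> - Yinf \<omega>))\<^sup>2)) \<and>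
           (\<lambda>n. \<integral>\<omega>. (cmod (Yseq m A Au n \<omega> - Yinf \<omega>))\<^sup>2 \<partial>M) \<longlonglongrightarrow> 0 \<and>
           (\<integral>\<omega>. (cmod (Yinf \<omega> - (\<integral>x. Yinf x \<partial>M)))\<^sup>2 \<partial>M)
             = ((real m)\<^sup>2 * (\<integral>\<omega>. (cmod (A \<omega>))\<^sup>2 \<partial>M) - 1)
               / (1 - real m * (\<integral>\<omega>. (cmod (A \<omega>))\<^sup>2 \<partial>M))"
proof -
  interpret prob_space M by (rule P)
  interpret E: exponential_weight M m lam tau
    using m2 root re tau_indep tau_exp by unfold_locales auto
  have A: "A = E.A"
    unfolding A_def E.A_def[abs_def] E.T_def ..
  interpret C: L2_bounded_cascade M m "\<lambda>u. if u = [] then A else Au u" "expectation (\<lambda>\<omega>. (cmod (A \<omega>))\<^sup>2)"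
    using m2 indep copies E.expectation_A E.AE_norm_A_le_1 E.second_moment_A_lt unfolding A
    by (intro L2_bounded_cascade_root_and_copies) auto
  have Y: "Yseq m A Au n \<omega> = C.Y [] n \<omega>" for n \<omega>
    unfolding Yseq_eq_tree_sum C.Y_def by (rule arg_cong[where f="\<lambda>g. tree_sum m g n"]) auto
  show ?thesis
    using C.measurable_Y_lim C.AE_Y_tendsto_Y_lim C.integrable_sq_norm_Y_lim C.integrable_sq_dist_Y_lim
      C.L2_tendsto_Y_lim C.expectation_sq_dist_Y_lim_1 C.expectation_Y_lim
    by (intro exI[of _ C.Y_lim]) (simp add: Y C.variance_limit_def)
qed

end
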